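(* In $\mathcal{V}$, for all $p,q\in P$: $p\preccurlyeq q$ if and only if $|S_p|\leqslant|S_q|$, and $p\preccurlyeq^\ast q$ if and only if $|S_p|\leqslant^\ast|S_q|$.
   Context: Work in $\mathsf{ZFA}$ (set theory with atoms) over a ground model of $\mathsf{ZFC}$ containing a doubly ordered set $\langle P,\preccurlyeq,\preccurlyeq^\ast\rangle$ (i.e. $\preccurlyeq$ a partial order on $P$, $\preccurlyeq^\ast$ a preorder on $P$, and $p\preccurlyeq q\Rightarrow p\preccurlyeq^\ast q$). Write $p\prec q$ for ($p\preccurlyeq q$ and $p\neq q$). For a quadruple $\langle x_0,x_1,x_2,x_3\rangle$ and $i<4$, $\mathrm{pr}_i(\langle x_0,x_1,x_2,x_3\rangle)=x_i$. For a set $S$, $\mathscr{S}(S)$ is the set of permutations of $S$. Define recursively $A_0=\{\langle0,p,\varnothing,k\rangle\mid p\in P,k\in\omega\}$ and $A_{n+1}=A_n\cup\{\langle n+1,q,a,0\rangle\mid q\in P,a\in A_n,\mathrm{pr}_1(a)\prec q\}\cup\{\langle n+1,q,a,k\rangle\mid q\in P,a\in A_n,\mathrm{pr}_1(a)\not\preccurlyeq q,\mathrm{pr}_1(a)\preccurlyeq^\ast q,k\in\omega\}$; let $A=\bigcup_{n}A_n$, whose elements serve as the atoms. Define groups $\mathcal{G}_n\subseteq\mathscr{S}(A_n)$: $\mathcal{G}_0=\{f\in\mathscr{S}(A_0)\mid \mathrm{pr}_1(f(a))=\mathrm{pr}_1(a)\text{ for all }a\in A_0\}$; for $f\in\mathscr{S}(A_{n+1})$,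 $f\in\mathcal{G}_{n+1}$ iff $f{\upharpoonright}A_n\in\mathcal{G}_n$ and for all $b\in A_{n+1}\setminus A_n$, $\mathrm{pr}_1(f(b))=\mathrm{pr}_1(b)$ and $\mathrm{pr}_2(f(b))=f(\mathrm{pr}_2(b))$. Let $\mathcal{G}=\{\pi\in\mathscr{S}(A)\mid \pi{\upharpoonright}A_n\in\mathcal{G}_n\text{ for all }n\}$. $\mathcal{V}$ is the permutation model determined by $\mathcal{G}$ and finite supports: $x\in\mathcal{V}$ iff $x\subseteq\mathcal{V}$ and there is a finite $B\subseteq A$ (a support of $x$) such that every $\pi\in\mathcal{G}$ fixing $B$ pointwise fixes $x$. For $p\in P$, $S_p=\{a\in A\mid \mathrm{pr}_1(a)=p\}$. For sets $X,Y$, $|X|\leqslant|Y|$ means there is an injection from $X$ into $Y$, and $|X|\leqslant^\ast|Y|$ means there is a surjection from a subset of $Y$ onto $X$ (both computed in $\mathcal{V}$). *)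

theory Defs
  imports Main
begin

text \<open>Atoms: quadruples (level, element of P, predecessor atom or empty set, natural number).
  The empty set in the third coordinate is represented by None.\<close>
datatype 'p atom = At nat 'p "'p atom option" nat

fun pr0 :: "'p atom \<Rightarrow> nat" where "pr0 (At n p a k) = n"
fun pr1 :: "'p atom \<Rightarrow> 'p" where "pr1 (At n p a k) = p"
fun pr2 :: "'p atom \<Rightarrow> 'p atom option" where "pr2 (At n p a k) = a"
fun pr3 :: "'p atom \<Rightarrow> nat" where "pr3 (At n p a k) = k"

primrec Alev :: "'p set \<Rightarrow> ('p \<Rightarrow> 'p \<Rightarrow> bool) \<Rightarrow> ('p \<Rightarrow> 'p \<Rightarrow> bool) \<Rightarrow> nat \<Rightarrow> 'p atom set" where
  "Alev P le les 0 = {At 0 p None k | p k. p \<in> P}"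
| "Alev P le les (Suc n) = Alev P le les n
     \<union> {At (Suc n) q (Some a) 0 | q a. q \<in> P \<and> a \<in> Alev P le les n
            \<and> le (pr1 a) q \<and> pr1 a \<noteq> q}
     \<union> {At (Suc n) q (Some a) k | q a k. q \<in> P \<and> a \<in> Alev P le les n
            \<and> \<not> le (pr1 a) q \<and> les (pr1 a) q}"

definition Aall :: "'p set \<Rightarrow> ('p \<Rightarrow> 'p \<Rightarrow> bool) \<Rightarrow> ('p \<Rightarrow> 'p \<Rightarrow> bool) \<Rightarrow> 'p atom set" where
  "Aall P le les = (\<Union>n. Alev P le les n)"

text \<open>The groups G_n (a function f belongs to Glev n iff its restriction to A_n is in G_n).\<close>
primrec Glev :: "'p set \<Rightarrow> ('p \<Rightarrow> 'p \<Rightarrow> bool) \<Rightarrow> ('p \<Rightarrow> 'p \<Rightarrow> bool) \<Rightarrow> nat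
                 \<Rightarrow> ('p atom \<Rightarrow> 'p atom) set" where
  "Glev P le les 0 = {f. bij_betw f (Alev P le les 0) (Alev P le les 0)
      \<and> (\<forall>a \<in> Alev P le les 0. pr1 (f a) = pr1 a)}"
| "Glev P le les (Suc n) = {f. bij_betw f (Alev P le les (Suc n)) (Alev P le les (Suc n))
      \<and> f \<in> Glev P le les n
      \<and> (\<forall>b \<in> Alev P le les (Suc n) - Alev P le les n.
            pr1 (f b) = pr1 b \<and> pr2 (f b) = map_option f (pr2 b))}"

text \<open>The group G of permutations of A (only the values on A matter).\<close>
definition Gperm :: "'p set \<Rightarrow> ('p \<Rightarrow> 'p \<Rightarrow> bool) \<Rightarrow> ('p \<Rightarrow> 'p \<Rightarrow> bool) \<Rightarrow> ('p atom \<Rightarrow> 'p atom) set" where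
  "Gperm P le les = {\<pi>. bij_betw \<pi> (Aall P le les) (Aall P le les) \<and> (\<forall>n. \<pi> \<in> Glev P le les n)}"

definition in_V_rel :: "'p set \<Rightarrow> ('p \<Rightarrow> 'p \<Rightarrow> bool) \<Rightarrow> ('p \<Rightarrow> 'p \<Rightarrow> bool)
                         \<Rightarrow> ('p atom \<times> 'p atom) set \<Rightarrow> bool" where
  "in_V_rel P le les R \<longleftrightarrow> (\<exists>B. finite B \<and> B \<subseteq> Aall P le les \<and>
     (\<forall>\<pi> \<in> Gperm P le les. (\<forall>b \<in> B. \<pi> b = b) \<longrightarrow> (\<lambda>(x, y). (\<pi> x, \<pi> y)) ` R = R))"

definition Sset :: "'p set \<Rightarrow> ('p \<Rightarrow> 'p \<Rightarrow> bool) \<Rightarrow> ('p \<Rightarrow> 'p \<Rightarrow> bool) \<Rightarrow> 'p \<Rightarrow> 'p atom set" where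
  "Sset P le les p = {a \<in> Aall P le les. pr1 a = p}"

text \<open>|S_p| \<le> |S_q| in V: an injection S_p \<rightarrow> S_q lying in V.\<close>
definition V_le :: "'p set \<Rightarrow> ('p \<Rightarrow> 'p \<Rightarrow> bool) \<Rightarrow> ('p \<Rightarrow> 'p \<Rightarrow> bool) \<Rightarrow> 'p \<Rightarrow> 'p \<Rightarrow> bool" where
  "V_le P le les p q \<longleftrightarrow> (\<exists>f. inj_on f (Sset P le les p) \<and> f ` Sset P le les p \<subseteq> Sset P le les q
       \<and> in_V_rel P le les {(x, f x) | x. x \<in> Sset P le les p})"

text \<open>|S_p| \<le>* |S_q| in V: a surjection from a subset of S_q onto S_p lying in V.\<close>
definition V_le_star :: "'p set \<Rightarrow> ('p \<Rightarrow> 'p \<Rightarrow> bool) \<Rightarrow> ('p \<Rightarrow> 'p \<Rightarrow> bool) \<Rightarrow> 'p \<Rightarrow> 'p \<Rightarrow> bool" where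
  "V_le_star P le les p q \<longleftrightarrow> (\<exists>D g. D \<subseteq> Sset P le les q \<and> g ` D = Sset P le les p
       \<and> in_V_rel P le les {(y, g y) | y. y \<in> D})"

end

theory Submission
  imports Defs
begin

(*
  Every atom carries the chain of its predecessors, ending in a root <0, p, None, k>, and every
  permutation in G preserves levels and P-labels and commutes with taking predecessors. Along a
  chain the labels increase for the preorder; they increase for the order except at "free"
  steps from a label r to a label s with r \<preccurlyeq> s failing, where the last coordinate of the upper
  atom can be chosen freely.

  If p \<prec> q, the map a |-> <n+1, q, a, 0> is an injection S_p -> S_q commuting
  with G, because the last coordinate of such an atom is forced to be 0; if p \<preccurlyeq>* q, taking
  predecessors maps the atoms of S_q lying directly above S_p onto S_p. Conversely, let f be an
  injection S_p -> S_q (resp. g a surjection from part of S_q onto S_p) with finite support B,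
  and pick a root a in S_p that lies below no element of B. Interchanging the trees above a and
  above another such root fixes B, so a must lie on the chain of f a (resp. of some y with
  g y = a). For g this gives p \<preccurlyeq>* q. For f, if p \<preccurlyeq> q fails, the chain from a to f a
  contains a free step; interchanging the tree above its upper atom with the tree above a twin
  that differs only in the last coordinate fixes B and a but moves f a.
*)

lemma bij_betw_image_eq_if_invariant:
  assumes "bij_betw f A A" "D \<subseteq> A" "\<And>x. x \<in> A \<Longrightarrow> f x \<in> D \<longleftrightarrow> x \<in> D"
  shows "f ` D = D"
proof
  show "f ` D \<subseteq> D" using assms(2,3) by blast
  show "D \<subseteq> f ` D"
  proof
    fix x assume x: "x \<in> D"
    then obtain y where "y \<in> A" "x = f y" using assms(1,2) by (auto simp: bij_betw_def)
    then show "x \<in> f ` D" using assms(3) x by auto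
  qed
qed

section \<open>Atoms\<close>

definition admissible_step :: "('p \<Rightarrow> 'p \<Rightarrow> bool) \<Rightarrow> ('p \<Rightarrow> 'p \<Rightarrow> bool) \<Rightarrow> 'p \<Rightarrow> 'p \<Rightarrow> nat \<Rightarrow> bool"
  where "admissible_step le les r s j \<longleftrightarrow> (le r s \<and> r \<noteq> s \<and> j = 0) \<or> (\<not> le r s \<and> les r s)"

lemma atom_eqI: "pr0 x = pr0 y \<Longrightarrow> pr1 x = pr1 y \<Longrightarrow> pr2 x = pr2 y \<Longrightarrow> pr3 x = pr3 y \<Longrightarrow> x = y"
  by (cases x; cases y) auto

lemma Alev_At:
  "At m s oo j \<in> Alev P le les n \<longleftrightarrow> m \<le> n \<and> s \<in> P \<and>
     (case oo of None \<Rightarrow> m = 0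
      | Some z \<Rightarrow> 0 < m \<and> z \<in> Alev P le les (m - 1) \<and> admissible_step le les (pr1 z) s j)"
proof (induction n arbitrary: m s oo j)
  case 0
  then show ?case by (auto split: option.splits)
next
  case (Suc n)
  show ?case
  proof (cases "m \<le> n")
    case True
    then show ?thesis
      using Suc.IH[of m s oo j] by (auto simp: admissible_step_def split: option.splits)
  next
    case False
    then have "At m s oo j \<notin> Alev P le les n" using Suc.IH[of m s oo j] by simp
    then show ?thesis
      using False by (cases "m = Suc n") (auto simp: admissible_step_def split: option.splits)
  qed
qed

lemma Alev_iff_level: "x \<in> Alev P le les n \<longleftrightarrow> x \<in> Aall P le les \<and> pr0 x \<le> n"
proof -
  have "x \<in> Alev P le les n \<longleftrightarrow> x \<in> Alev P le les (pr0 x) \<and> pr0 x \<le> n" for n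
    by (cases x) (auto simp: Alev_At)
  then show ?thesis unfolding Aall_def by blast
qed

lemma Aall_At:
  "At m s oo j \<in> Aall P le les \<longleftrightarrow> s \<in> P \<and>
     (case oo of None \<Rightarrow> m = 0
      | Some z \<Rightarrow> z \<in> Aall P le les \<and> pr0 z < m \<and> admissible_step le les (pr1 z) s j)"
proof -
  have "At m s oo j \<in> Aall P le les \<longleftrightarrow> At m s oo j \<in> Alev P le les m"
    by (simp add: Alev_iff_level)
  also have "\<dots> \<longleftrightarrow> s \<in> P \<and>
     (case oo of None \<Rightarrow> m = 0
      | Some z \<Rightarrow> z \<in> Aall P le les \<and> pr0 z < m \<and> admissible_step le les (pr1 z) s j)"
    by (simp add: Alev_At split: option.splits) (auto simp: Alev_iff_level)
  finally show ?thesis .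
qed

lemma Aall_pr1: "x \<in> Aall P le les \<Longrightarrow> pr1 x \<in> P"
  by (cases x) (simp add: Aall_At)

lemma Aall_pr2:
  "x \<in> Aall P le les \<Longrightarrow> pr2 x = Some z \<Longrightarrow>
    z \<in> Aall P le les \<and> admissible_step le les (pr1 z) (pr1 x) (pr3 x)"
  by (cases x) (simp add: Aall_At)

lemma Aall_pr3_eq_0:
  "x \<in> Aall P le les \<Longrightarrow> pr2 x = Some z \<Longrightarrow> le (pr1 z) (pr1 x) \<Longrightarrow> pr3 x = 0"
  using Aall_pr2 unfolding admissible_step_def by blast

lemma Gperm_Aall: "\<pi> \<in> Gperm P le les \<Longrightarrow> x \<in> Aall P le les \<Longrightarrow> \<pi> x \<in> Aall P le les"
  by (auto simp: Gperm_def bij_betw_def)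

lemma Glev_bij: "f \<in> Glev P le les n \<Longrightarrow> bij_betw f (Alev P le les n) (Alev P le les n)"
  by (cases n) auto

lemma Gperm_preserves_Alev:
  assumes g: "\<pi> \<in> Gperm P le les" and x: "x \<in> Aall P le les"
  shows "\<pi> x \<in> Alev P le les n \<longleftrightarrow> x \<in> Alev P le les n"
proof
  have bij: "bij_betw \<pi> (Alev P le les n) (Alev P le les n)"
    using g by (simp add: Gperm_def Glev_bij)
  show "x \<in> Alev P le les n \<Longrightarrow> \<pi> x \<in> Alev P le les n"
    using bij by (auto simp: bij_betw_def)
  assume "\<pi> x \<in> Alev P le les n"
  then obtain x' where x': "x' \<in> Alev P le les n" "\<pi> x' = \<pi> x"
    using bij by (metis bij_betw_imp_surj_on imageE)
  have "inj_on \<pi> (Aall P le les)"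
    using g by (simp add: Gperm_def bij_betw_def)
  moreover have "x' \<in> Aall P le les"
    using x' by (simp add: Alev_iff_level)
  ultimately show "x \<in> Alev P le les n"
    using x x' by (metis inj_on_def)
qed

lemma Gperm_preserves:
  assumes g: "\<pi> \<in> Gperm P le les" and x: "x \<in> Aall P le les"
  shows "pr0 (\<pi> x) = pr0 x" "pr1 (\<pi> x) = pr1 x" "pr2 (\<pi> x) = map_option \<pi> (pr2 x)"
proof -
  note lev = Gperm_preserves_Alev[OF g x]
  show level: "pr0 (\<pi> x) = pr0 x"
    using lev[of "pr0 x"] lev[of "pr0 (\<pi> x)"] x Gperm_Aall[OF g x] by (simp add: Alev_iff_level)
  have "pr1 (\<pi> x) = pr1 x \<and> pr2 (\<pi> x) = map_option \<pi> (pr2 x)"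
  proof (cases "pr0 x")
    case 0
    have no_pred: "pr2 y = None" if "y \<in> Aall P le les" "pr0 y = 0" for y
      using that by (cases y) (auto simp: Aall_At split: option.splits)
    have "\<pi> \<in> Glev P le les 0"
      using g unfolding Gperm_def by blast
    moreover have "x \<in> Alev P le les 0"
      using 0 x by (simp del: Alev.simps add: Alev_iff_level)
    ultimately have "pr1 (\<pi> x) = pr1 x"
      unfolding Glev.simps by blast
    then show ?thesis
      using 0 level no_pred[OF x] no_pred[OF Gperm_Aall[OF g x]] by simp
  next
    case (Suc m)
    have "\<pi> \<in> Glev P le les (Suc m)"
      using g unfolding Gperm_def by blast
    moreover have "x \<in> Alev P le les (Suc m) - Alev P le les m"
      using Suc x by (simp del: Alev.simps add: Alev_iff_level)
    ultimately show ?thesis by (simp only: Glev.simps) blast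
  qed
  then show "pr1 (\<pi> x) = pr1 x" "pr2 (\<pi> x) = map_option \<pi> (pr2 x)" by simp_all
qed

lemma Gperm_Sset_iff:
  "\<pi> \<in> Gperm P le les \<Longrightarrow> x \<in> Aall P le les \<Longrightarrow> \<pi> x \<in> Sset P le les p \<longleftrightarrow> x \<in> Sset P le les p"
  by (simp add: Sset_def Gperm_Aall Gperm_preserves)

lemma Gperm_image_Sset: "\<pi> \<in> Gperm P le les \<Longrightarrow> \<pi> ` Sset P le les p = Sset P le les p"
proof (rule bij_betw_image_eq_if_invariant)
  assume g: "\<pi> \<in> Gperm P le les"
  then show "bij_betw \<pi> (Aall P le les) (Aall P le les)" by (simp add: Gperm_def)
  show "Sset P le les p \<subseteq> Aall P le les" by (auto simp: Sset_def)
  show "\<And>x. x \<in> Aall P le les \<Longrightarrow> \<pi> x \<in> Sset P le les p \<longleftrightarrow> x \<in> Sset P le les p"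
    using Gperm_Sset_iff[OF g] .
qed

section \<open>Chains of predecessors\<close>

fun below :: "'p atom \<Rightarrow> 'p atom \<Rightarrow> bool" where
  "below u (At m s None j) \<longleftrightarrow> u = At m s None j"
| "below u (At m s (Some z) j) \<longleftrightarrow> u = At m s (Some z) j \<or> below u z"

fun root :: "'p atom \<Rightarrow> 'p atom" where
  "root (At m s None j) = At m s None j"
| "root (At m s (Some z) j) = root z"

lemma below_refl: "below x x"
  by (cases x rule: root.cases) auto

lemma below_trans: "below a b \<Longrightarrow> below b c \<Longrightarrow> below a c"
  by (induction b c rule: below.induct) auto

lemma below_size: "below a b \<Longrightarrow> size a \<le> size b"
  by (induction a b rule: below.induct) auto

lemma below_root: "below x b \<Longrightarrow> pr2 x = None \<Longrightarrow> x = root b"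
  by (induction x b rule: below.induct) auto

lemma below_Aall: "below a y \<Longrightarrow> y \<in> Aall P le les \<Longrightarrow> a \<in> Aall P le les"
  by (induction a y rule: below.induct) (auto simp: Aall_At)

lemma fresh_root:
  assumes "finite B"
  obtains k where "\<forall>b\<in>B. \<not> below (At 0 p None k) b"
proof -
  obtain k where k: "k \<notin> pr3 ` root ` B"
    using assms by (metis ex_new_if_finite finite_imageI infinite_UNIV_nat)
  have "\<not> below (At 0 p None k) b" if "b \<in> B" for b
  proof
    assume "below (At 0 p None k) b"
    then have "At 0 p None k = root b" by (simp add: below_root)
    then show False using k that by (metis image_eqI pr3.simps)
  qed
  then show ?thesis using that by blast
qed

lemma les_along_chain:
  assumes les_refl: "\<forall>p \<in> P. les p p"
    and les_trans: "\<forall>p \<in> P. \<forall>q \<in> P. \<forall>r \<in> P. les p q \<longrightarrow> les q r \<longrightarrow> les p r"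
    and le_les: "\<forall>p \<in> P. \<forall>q \<in> P. le p q \<longrightarrow> les p q"
  shows "below a y \<Longrightarrow> y \<in> Aall P le les \<Longrightarrow> les (pr1 a) (pr1 y)"
proof (induction a y rule: below.induct)
  case (1 u m s j)
  then show ?case using les_refl by (simp add: Aall_At)
next
  case (2 u m s z j)
  show ?case
  proof (cases "u = At m s (Some z) j")
    case True
    then show ?thesis using les_refl "2.prems"(2) by (simp add: Aall_At)
  next
    case False
    then have uz: "below u z" using "2.prems"(1) by simp
    have z: "z \<in> Aall P le les" "s \<in> P" "admissible_step le les (pr1 z) s j"
      using "2.prems"(2) by (simp_all add: Aall_At)
    have "les (pr1 u) (pr1 z)" using "2.IH"[OF uz z(1)] .
    moreover have "les (pr1 z) s"
      using z le_les Aall_pr1[OF z(1)] unfolding admissible_step_def by blast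
    ultimately have "les (pr1 u) s"
      using les_trans Aall_pr1[OF below_Aall[OF uz z(1)]] Aall_pr1[OF z(1)] z(2) by blast
    then show ?thesis by simp
  qed
qed

lemma free_step_in_chain:
  assumes le_refl: "\<forall>p \<in> P. le p p"
    and le_trans: "\<forall>p \<in> P. \<forall>q \<in> P. \<forall>r \<in> P. le p q \<longrightarrow> le q r \<longrightarrow> le p r"
  shows "below a y \<Longrightarrow> y \<in> Aall P le les \<Longrightarrow> \<not> le (pr1 a) (pr1 y) \<Longrightarrow>
    \<exists>u z. below u y \<and> pr2 u = Some z \<and> below a z \<and> \<not> le (pr1 z) (pr1 u)"
proof (induction a y rule: below.induct)
  case (1 u m s j)
  then show ?case using le_refl by (simp add: Aall_At)
next
  case (2 a m s z j)
  let ?y = "At m s (Some z) j"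
  have "a \<noteq> ?y" using "2.prems"(2,3) le_refl by (auto simp: Aall_At)
  then have az: "below a z" using "2.prems"(1) by simp
  have z: "z \<in> Aall P le les" "s \<in> P" using "2.prems"(2) by (simp_all add: Aall_At)
  show ?case
  proof (cases "le (pr1 a) (pr1 z)")
    case True
    moreover have "\<not> le (pr1 a) s" using "2.prems"(3) by simp
    ultimately have "\<not> le (pr1 z) s"
      using le_trans Aall_pr1[OF below_Aall[OF az z(1)]] Aall_pr1[OF z(1)] z(2) by blast
    then show ?thesis using az below_refl[of ?y] by fastforce
  next
    case False
    then obtain u z' where "below u z" "pr2 u = Some z'" "below a z'" "\<not> le (pr1 z') (pr1 u)"
      using "2.IH"[OF az z(1)] by blast
    then show ?thesis by auto
  qed
qed

section \<open>Interchanging the trees above twin atoms\<close>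

definition twins :: "'p atom \<Rightarrow> 'p atom \<Rightarrow> bool" where
  "twins u v \<longleftrightarrow> pr0 u = pr0 v \<and> pr1 u = pr1 v \<and> pr2 u = pr2 v \<and> u \<noteq> v"

fun swap_trees :: "'p atom \<Rightarrow> 'p atom \<Rightarrow> 'p atom \<Rightarrow> 'p atom" where
  "swap_trees u v (At m s oo j) =
     (if At m s oo j = u then v else if At m s oo j = v then u
      else At m s (map_option (swap_trees u v) oo) j)"

lemma swap_trees_not_below: "\<not> below u x \<Longrightarrow> \<not> below v x \<Longrightarrow> swap_trees u v x = x"
proof (induction x)
  case (At m s oo j)
  then show ?case by (cases oo) auto
qed

lemma swap_trees_below: "twins u v \<Longrightarrow> below u x \<Longrightarrow> swap_trees u v x \<noteq> x"
proof (induction x)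
  case (At m s oo j)
  then show ?case by (cases oo) (auto simp: twins_def)
qed

lemma swap_trees_pred:
  assumes "twins u v"
  shows "map_option (swap_trees u v) (pr2 u) = pr2 u"
proof (cases u)
  case (At m s oo j)
  have "size z < size u" "size u = size v" if "oo = Some z" for z
    using assms that At by (cases v; simp add: twins_def)+
  then have "swap_trees u v z = z" if "oo = Some z" for z
    using that below_size by (metis swap_trees_not_below not_less)
  then show ?thesis using At by (cases oo) auto
qed

lemma swap_trees_twin: "swap_trees u v u = v" "u \<noteq> v \<Longrightarrow> swap_trees u v v = u"
  by (cases u; simp) (cases v; simp)

lemma swap_trees_other:
  "x \<noteq> u \<Longrightarrow> x \<noteq> v \<Longrightarrow>
    swap_trees u v x = At (pr0 x) (pr1 x) (map_option (swap_trees u v) (pr2 x)) (pr3 x)"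
  by (cases x) simp

lemma swap_trees_coords:
  assumes tw: "twins u v"
  shows "pr0 (swap_trees u v x) = pr0 x" "pr1 (swap_trees u v x) = pr1 x"
    "pr2 (swap_trees u v x) = map_option (swap_trees u v) (pr2 x)"
proof -
  have t: "pr0 u = pr0 v" "pr1 u = pr1 v" "pr2 u = pr2 v" "u \<noteq> v"
    using tw by (simp_all add: twins_def)
  have "pr0 (swap_trees u v x) = pr0 x \<and> pr1 (swap_trees u v x) = pr1 x \<and>
    pr2 (swap_trees u v x) = map_option (swap_trees u v) (pr2 x)"
  proof (cases "x = u \<or> x = v")
    case True
    then show ?thesis using t swap_trees_pred[OF tw] by (auto simp add: swap_trees_twin)
  next
    case False
    then show ?thesis by (simp add: swap_trees_other)
  qed
  then show "pr0 (swap_trees u v x) = pr0 x" "pr1 (swap_trees u v x) = pr1 x"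
    "pr2 (swap_trees u v x) = map_option (swap_trees u v) (pr2 x)" by simp_all
qed

lemma swap_trees_involution:
  assumes tw: "twins u v"
  shows "swap_trees u v (swap_trees u v x) = x"
proof (induction x)
  case (At m s oo j)
  let ?sw = "swap_trees u v" and ?x = "At m s oo j"
  have IH: "map_option ?sw (map_option ?sw oo) = oo"
    using At.IH by (cases oo) auto
  show ?case
  proof (cases "?x = u \<or> ?x = v")
    case True
    then show ?thesis using tw by (auto simp: twins_def swap_trees_twin)
  next
    case False
    have "At m s (map_option ?sw oo) j \<noteq> w" if w: "w = u \<or> w = v" for w
    proof
      assume "At m s (map_option ?sw oo) j = w"
      moreover have "map_option ?sw (pr2 w) = pr2 w"
        using w swap_trees_pred[OF tw] tw by (auto simp: twins_def)
      ultimately have "?x = w"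
        using IH by (intro atom_eqI) auto
      then show False using w False by blast
    qed
    then show ?thesis using False IH by (simp add: swap_trees_other)
  qed
qed

lemma swap_trees_Aall:
  assumes tw: "twins u v" and u: "u \<in> Aall P le les" and v: "v \<in> Aall P le les"
  shows "x \<in> Aall P le les \<Longrightarrow> swap_trees u v x \<in> Aall P le les"
proof (induction x)
  case (At m s oo j)
  show ?case
  proof (cases "At m s oo j = u \<or> At m s oo j = v")
    case True
    then show ?thesis using u v tw by (auto simp: twins_def swap_trees_twin)
  next
    case False
    then have sw: "swap_trees u v (At m s oo j) = At m s (map_option (swap_trees u v) oo) j"
      by (simp add: swap_trees_other)
    show ?thesis
    proof (cases oo)
      case None
      then show ?thesis using At.prems sw by simp
    next
      case (Some z)
      then have "z \<in> Aall P le les" using At.prems by (simp add: Aall_At)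
      then have "swap_trees u v z \<in> Aall P le les" using At.IH Some by simp
      then show ?thesis
        using At.prems sw Some swap_trees_coords(1,2)[OF tw, of z] by (simp add: Aall_At)
    qed
  qed
qed

lemma swap_trees_Gperm:
  assumes tw: "twins u v" and u: "u \<in> Aall P le les" and v: "v \<in> Aall P le les"
  shows "swap_trees u v \<in> Gperm P le les"
proof -
  have bij: "bij_betw (swap_trees u v) A A"
    if "\<And>x. x \<in> A \<Longrightarrow> swap_trees u v x \<in> A" for A
    using that swap_trees_involution[OF tw]
    by (intro bij_betw_byWitness[where f' = "swap_trees u v"])
      (simp_all del: swap_trees.simps add: image_subset_iff)
  have Aall: "bij_betw (swap_trees u v) (Aall P le les) (Aall P le les)"
    using bij swap_trees_Aall[OF tw u v] .
  have Alev: "bij_betw (swap_trees u v) (Alev P le les n) (Alev P le les n)" for n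
    by (rule bij) (metis swap_trees_Aall[OF tw u v] swap_trees_coords(1)[OF tw] Alev_iff_level)
  have "swap_trees u v \<in> Glev P le les n" for n
  proof (induction n)
    case 0
    show ?case
      unfolding Glev.simps mem_Collect_eq using Alev swap_trees_coords(2)[OF tw] by blast
  next
    case (Suc n)
    show ?case
      unfolding Glev.simps mem_Collect_eq using Alev Suc.IH swap_trees_coords(2,3)[OF tw] by blast
  qed
  then show ?thesis
    using Aall by (simp add: Gperm_def)
qed

lemma swap_roots_moves:
  assumes p: "p \<in> P" and C: "finite C" and a: "\<forall>c\<in>C. \<not> below (At 0 p None k) c"
  obtains \<pi> where "\<pi> \<in> Gperm P le les" "\<forall>c\<in>C. \<pi> c = c"
    "\<pi> (At 0 p None k) \<noteq> At 0 p None k" "\<pi> (At 0 p None k) \<in> Sset P le les p"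
proof -
  let ?a = "At 0 p None k"
  obtain k' where k': "\<forall>c\<in>insert ?a C. \<not> below (At 0 p None k') c"
    using fresh_root[of "insert ?a C"] C by blast
  let ?a' = "At 0 p None k'"
  have tw: "twins ?a ?a'" using k' by (auto simp: twins_def)
  have A: "?a \<in> Aall P le les" "?a' \<in> Aall P le les" using p by (simp_all add: Aall_At)
  show ?thesis
  proof
    show "swap_trees ?a ?a' \<in> Gperm P le les" using swap_trees_Gperm[OF tw A] .
    show "\<forall>c\<in>C. swap_trees ?a ?a' c = c" using a k' by (simp add: swap_trees_not_below)
    show "swap_trees ?a ?a' ?a \<noteq> ?a" "swap_trees ?a ?a' ?a \<in> Sset P le les p"
      using tw A(2) by (simp_all add: swap_trees_twin twins_def Sset_def)
  qed
qed

lemma swap_free_step_moves: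
  assumes le_refl: "\<forall>p \<in> P. le p p"
    and le_trans: "\<forall>p \<in> P. \<forall>q \<in> P. \<forall>r \<in> P. le p q \<longrightarrow> le q r \<longrightarrow> le p r"
    and y: "y \<in> Aall P le les" and ay: "below a y" and npq: "\<not> le (pr1 a) (pr1 y)"
    and B: "\<forall>b\<in>B. \<not> below a b"
  obtains \<pi> where "\<pi> \<in> Gperm P le les" "\<forall>b\<in>B. \<pi> b = b" "\<pi> a = a" "\<pi> y \<noteq> y"
proof -
  obtain u z where uy: "below u y" and uz: "pr2 u = Some z" and az: "below a z"
    and free: "\<not> le (pr1 z) (pr1 u)"
    using free_step_in_chain[OF le_refl le_trans ay y npq] by blast
  \<comment> \<open>since \<open>\<not> le (pr1 z) (pr1 u)\<close>, every last coordinate is admissible above \<open>z\<close>\<close>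
  define v where "v = At (pr0 u) (pr1 u) (Some z) (Suc (pr3 u))"
  have tw: "twins u v" using uz by (cases u) (auto simp: twins_def v_def)
  have u: "u \<in> Aall P le les" using below_Aall[OF uy y] .
  have v: "v \<in> Aall P le les"
    using u uz free Aall_pr1[OF u] by (cases u) (auto simp: v_def Aall_At admissible_step_def)
  have au: "below a u" "below a v"
    using az uz by (cases u; simp add: v_def)+
  show ?thesis
  proof
    show "swap_trees u v \<in> Gperm P le les" using swap_trees_Gperm[OF tw u v] .
    show "\<forall>b\<in>B. swap_trees u v b = b"
      using B au below_trans by (metis swap_trees_not_below)
    have "size a < size u" "size a < size v"
      using below_size[OF az] uz by (cases u; simp add: v_def)+
    then show "swap_trees u v a = a"
      using below_size by (metis swap_trees_not_below not_less)
    show "swap_trees u v y \<noteq> y" using swap_trees_below[OF tw uy] .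
  qed
qed

section \<open>Comparing the sets \<open>S\<^sub>p\<close> in the permutation model\<close>

lemma in_V_relE:
  assumes "in_V_rel P le les R"
  obtains B where "finite B"
    "\<And>\<pi> x y. \<pi> \<in> Gperm P le les \<Longrightarrow> \<forall>b\<in>B. \<pi> b = b \<Longrightarrow> (x, y) \<in> R \<Longrightarrow> (\<pi> x, \<pi> y) \<in> R"
proof -
  obtain B where "finite B" and inv: "\<forall>\<pi> \<in> Gperm P le les. (\<forall>b \<in> B. \<pi> b = b) \<longrightarrow>
      (\<lambda>(x, y). (\<pi> x, \<pi> y)) ` R = R"
    using assms unfolding in_V_rel_def by blast
  moreover have "(\<pi> x, \<pi> y) \<in> R"
    if "\<pi> \<in> Gperm P le les" "\<forall>b\<in>B. \<pi> b = b" "(x, y) \<in> R" for \<pi> x y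
    using inv that by (metis (no_types, lifting) case_prod_conv image_eqI)
  ultimately show ?thesis using that by blast
qed

lemma in_V_rel_graphI:
  assumes "\<And>\<pi>. \<pi> \<in> Gperm P le les \<Longrightarrow> \<pi> ` S = S"
    and "\<And>\<pi> x. \<pi> \<in> Gperm P le les \<Longrightarrow> x \<in> S \<Longrightarrow> \<pi> (h x) = h (\<pi> x)"
  shows "in_V_rel P le les {(x, h x) | x. x \<in> S}"
proof -
  have "(\<lambda>(x, y). (\<pi> x, \<pi> y)) ` {(x, h x) | x. x \<in> S} = {(x, h x) | x. x \<in> S}"
    if g: "\<pi> \<in> Gperm P le les" for \<pi>
  proof -
    have "(\<lambda>(x, y). (\<pi> x, \<pi> y)) ` {(x, h x) | x. x \<in> S} = (\<lambda>x. (\<pi> x, \<pi> (h x))) ` S"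
      by (auto simp: image_iff)
    also have "\<dots> = (\<lambda>x. (x, h x)) ` (\<pi> ` S)"
      using assms(2)[OF g] by (auto simp: image_iff)
    also have "\<dots> = {(x, h x) | x. x \<in> S}"
      using assms(1)[OF g] by auto
    finally show ?thesis .
  qed
  then show ?thesis unfolding in_V_rel_def by (intro exI[of _ "{}"]) auto
qed

lemma in_V_rel_Sset_identity: "in_V_rel P le les {(x, x) | x. x \<in> Sset P le les p}"
  using in_V_rel_graphI[of P le les "Sset P le les p" id] by (simp add: Gperm_image_Sset)

lemma V_le_refl: "V_le P le les p p"
  unfolding V_le_def using in_V_rel_Sset_identity by (intro exI[of _ id]) simp

lemma V_le_star_refl: "V_le_star P le les p p"
  unfolding V_le_star_def using in_V_rel_Sset_identity
  by (intro exI[of _ "Sset P le les p"] exI[of _ id]) simp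

lemma V_le_if_le:
  fixes P :: "'p set"
  assumes q: "q \<in> P" and pq: "le p q"
  shows "V_le P le les p q"
proof (cases "p = q")
  case True
  then show ?thesis by (simp add: V_le_refl)
next
  case False
  define f where "f a = At (Suc (pr0 a)) q (Some a) 0" for a :: "'p atom"
  have into: "f ` Sset P le les p \<subseteq> Sset P le les q"
    using q pq False by (auto simp: f_def Sset_def Aall_At admissible_step_def)
  have "\<pi> (f a) = f (\<pi> a)" if g: "\<pi> \<in> Gperm P le les" and a: "a \<in> Sset P le les p" for \<pi> a
  proof (rule atom_eqI)
    have A: "a \<in> Aall P le les" "f a \<in> Aall P le les" using a into by (auto simp: Sset_def)
    show "pr0 (\<pi> (f a)) = pr0 (f (\<pi> a))" "pr1 (\<pi> (f a)) = pr1 (f (\<pi> a))"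
      "pr2 (\<pi> (f a)) = pr2 (f (\<pi> a))"
      using Gperm_preserves[OF g A(1)] Gperm_preserves[OF g A(2)] by (simp_all add: f_def)
    have "pr1 (\<pi> a) = p" using a Gperm_preserves[OF g A(1)] by (simp add: Sset_def)
    then show "pr3 (\<pi> (f a)) = pr3 (f (\<pi> a))"
      using Aall_pr3_eq_0[OF Gperm_Aall[OF g A(2)]] Gperm_preserves[OF g A(2)] pq
      by (simp add: f_def)
  qed
  then have "in_V_rel P le les {(x, f x) | x. x \<in> Sset P le les p}"
    by (intro in_V_rel_graphI) (simp_all add: Gperm_image_Sset)
  moreover have "inj_on f (Sset P le les p)"
    by (simp add: f_def inj_on_def)
  ultimately show ?thesis
    using into unfolding V_le_def by blast
qed

lemma V_le_star_if_les:
  fixes P :: "'p set"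
  assumes q: "q \<in> P" and pq: "les p q"
  shows "V_le_star P le les p q"
proof (cases "p = q")
  case True
  then show ?thesis by (simp add: V_le_star_refl)
next
  case False
  define D where "D = {y \<in> Sset P le les q. \<exists>z \<in> Sset P le les p. pr2 y = Some z}"
  define g where "g y = the (pr2 y)" for y :: "'p atom"
  have "Sset P le les p \<subseteq> g ` D"
  proof
    fix a assume a: "a \<in> Sset P le les p"
    have "admissible_step le les p q 0"
      using pq False by (auto simp: admissible_step_def)
    then have "At (Suc (pr0 a)) q (Some a) 0 \<in> D"
      using a q by (auto simp: D_def Sset_def Aall_At)
    then show "a \<in> g ` D" by (force simp: g_def)
  qed
  then have onto: "g ` D = Sset P le les p"
    by (auto simp: D_def g_def)
  have "\<pi> ` D = D" if gp: "\<pi> \<in> Gperm P le les" for \<pi>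
  proof (rule bij_betw_image_eq_if_invariant)
    show "bij_betw \<pi> (Aall P le les) (Aall P le les)" using gp by (simp add: Gperm_def)
    show "D \<subseteq> Aall P le les" by (auto simp: D_def Sset_def)
    fix y assume y: "y \<in> Aall P le les"
    have "(\<exists>z' \<in> Sset P le les p. map_option \<pi> (pr2 y) = Some z') \<longleftrightarrow>
        (\<exists>z \<in> Sset P le les p. pr2 y = Some z)"
      using Gperm_Sset_iff[OF gp] Aall_pr2[OF y] by (cases "pr2 y") auto
    then show "\<pi> y \<in> D \<longleftrightarrow> y \<in> D"
      using Gperm_Sset_iff[OF gp y] Gperm_preserves(3)[OF gp y] by (simp add: D_def)
  qed
  moreover have "\<pi> (g y) = g (\<pi> y)" if "\<pi> \<in> Gperm P le les" "y \<in> D" for \<pi> y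
    using that Gperm_preserves(3)[of \<pi> P le les y] by (auto simp: D_def Sset_def g_def)
  ultimately have "in_V_rel P le les {(y, g y) | y. y \<in> D}"
    by (rule in_V_rel_graphI)
  moreover have "D \<subseteq> Sset P le les q" by (auto simp: D_def)
  ultimately show ?thesis
    using onto unfolding V_le_star_def by blast
qed

lemma le_if_V_le:
  assumes le_refl: "\<forall>p \<in> P. le p p"
    and le_trans: "\<forall>p \<in> P. \<forall>q \<in> P. \<forall>r \<in> P. le p q \<longrightarrow> le q r \<longrightarrow> le p r"
    and p: "p \<in> P" and V: "V_le P le les p q"
  shows "le p q"
proof (rule ccontr)
  assume npq: "\<not> le p q"
  obtain f where inj: "inj_on f (Sset P le les p)" and into: "f ` Sset P le les p \<subseteq> Sset P le les q"
    and R: "in_V_rel P le les {(x, f x) | x. x \<in> Sset P le les p}"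
    using V unfolding V_le_def by blast
  obtain B where B: "finite B" and inv: "\<And>\<pi> x y. \<pi> \<in> Gperm P le les \<Longrightarrow> \<forall>b\<in>B. \<pi> b = b \<Longrightarrow>
      (x, y) \<in> {(x, f x) | x. x \<in> Sset P le les p} \<Longrightarrow> (\<pi> x, \<pi> y) \<in> {(x, f x) | x. x \<in> Sset P le les p}"
    using in_V_relE[OF R] by blast
  obtain k where "\<forall>b\<in>B. \<not> below (At 0 p None k) b" using fresh_root[OF B] .
  moreover define a where "a = At 0 p None k"
  ultimately have fresh: "\<forall>b\<in>B. \<not> below a b" by simp
  have a: "a \<in> Sset P le les p" using p by (simp add: a_def Sset_def Aall_At)
  then have fa: "f a \<in> Aall P le les" "pr1 (f a) = q" using into by (auto simp: Sset_def)
  have equivariant: "\<pi> (f a) = f (\<pi> a)" if "\<pi> \<in> Gperm P le les" "\<forall>b\<in>B. \<pi> b = b" for \<pi>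
    using inv[OF that, of a "f a"] a by blast
  show False
  proof (cases "below a (f a)")
    case False
    then have "\<forall>c\<in>insert (f a) B. \<not> below (At 0 p None k) c" using fresh by (simp add: a_def)
    then obtain \<pi> where g: "\<pi> \<in> Gperm P le les" and fixed: "\<forall>c\<in>insert (f a) B. \<pi> c = c"
      and moved: "\<pi> a \<noteq> a" "\<pi> a \<in> Sset P le les p"
      using swap_roots_moves[OF p, of "insert (f a) B" k le les] B unfolding a_def by blast
    have "f (\<pi> a) = f a" using equivariant[OF g] fixed by simp
    then show False using inj a moved by (metis inj_on_def)
  next
    case True
    moreover have "\<not> le (pr1 a) (pr1 (f a))" using npq fa(2) by (simp add: a_def)
    ultimately obtain \<pi> where g: "\<pi> \<in> Gperm P le les" and fixed: "\<forall>b\<in>B. \<pi> b = b" "\<pi> a = a"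
      and moved: "\<pi> (f a) \<noteq> f a"
      using swap_free_step_moves[OF le_refl le_trans fa(1)] fresh by blast
    then show False using equivariant[OF g] by simp
  qed
qed

lemma les_if_V_le_star:
  assumes les_refl: "\<forall>p \<in> P. les p p"
    and les_trans: "\<forall>p \<in> P. \<forall>q \<in> P. \<forall>r \<in> P. les p q \<longrightarrow> les q r \<longrightarrow> les p r"
    and le_les: "\<forall>p \<in> P. \<forall>q \<in> P. le p q \<longrightarrow> les p q"
    and p: "p \<in> P" and V: "V_le_star P le les p q"
  shows "les p q"
proof (rule ccontr)
  assume npq: "\<not> les p q"
  obtain D g where D: "D \<subseteq> Sset P le les q" and onto: "g ` D = Sset P le les p"
    and R: "in_V_rel P le les {(y, g y) | y. y \<in> D}"
    using V unfolding V_le_star_def by blast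
  obtain B where B: "finite B" and inv: "\<And>\<pi> x y. \<pi> \<in> Gperm P le les \<Longrightarrow> \<forall>b\<in>B. \<pi> b = b \<Longrightarrow>
      (x, y) \<in> {(y, g y) | y. y \<in> D} \<Longrightarrow> (\<pi> x, \<pi> y) \<in> {(y, g y) | y. y \<in> D}"
    using in_V_relE[OF R] by blast
  obtain k where "\<forall>b\<in>B. \<not> below (At 0 p None k) b" using fresh_root[OF B] .
  moreover define a where "a = At 0 p None k"
  ultimately have fresh: "\<forall>b\<in>B. \<not> below a b" by simp
  have "a \<in> g ` D" using p onto by (simp add: a_def Sset_def Aall_At)
  then obtain y where y: "y \<in> D" "g y = a" by blast
  have "\<not> below a y"
  proof
    assume "below a y"
    moreover have "y \<in> Aall P le les" "pr1 y = q" using y D by (auto simp: Sset_def)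
    ultimately have "les (pr1 a) q" using les_along_chain[OF les_refl les_trans le_les] by metis
    then show False using npq by (simp add: a_def)
  qed
  then have "\<forall>c\<in>insert y B. \<not> below (At 0 p None k) c" using fresh by (simp add: a_def)
  then obtain \<pi> where g: "\<pi> \<in> Gperm P le les" and fixed: "\<forall>c\<in>insert y B. \<pi> c = c"
    and moved: "\<pi> a \<noteq> a"
    using swap_roots_moves[OF p, of "insert y B" k le les] B unfolding a_def by blast
  have "\<pi> a = g (\<pi> y)" using inv[OF g, of y a] fixed y by blast
  then show False using fixed y moved by simp
qed

theorem theorem2p7:
  fixes P :: "'p set" and le les :: "'p \<Rightarrow> 'p \<Rightarrow> bool"
  assumes le_refl: "\<forall>p \<in> P. le p p"
    and le_trans: "\<forall>p \<in> P. \<forall>q \<in> P. \<forall>r \<in> P. le p q \<longrightarrow> le q r \<longrightarrow> le p r"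
    and le_antisym: "\<forall>p \<in> P. \<forall>q \<in> P. le p q \<longrightarrow> le q p \<longrightarrow> p = q"
    and les_refl: "\<forall>p \<in> P. les p p"
    and les_trans: "\<forall>p \<in> P. \<forall>q \<in> P. \<forall>r \<in> P. les p q \<longrightarrow> les q r \<longrightarrow> les p r"
    and le_les: "\<forall>p \<in> P. \<forall>q \<in> P. le p q \<longrightarrow> les p q"
  shows "\<forall>p \<in> P. \<forall>q \<in> P.
           (le p q \<longleftrightarrow> V_le P le les p q) \<and> (les p q \<longleftrightarrow> V_le_star P le les p q)"
proof (intro ballI conjI iffI)
  fix p q assume p: "p \<in> P" and q: "q \<in> P"
  show "V_le P le les p q" if "le p q" using V_le_if_le[of q P le p les] q that by blast
  show "le p q" if "V_le P le les p q" using le_if_V_le[OF le_refl le_trans p that] .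
  show "V_le_star P le les p q" if "les p q" using V_le_star_if_les[of q P les p le] q that by blast
  show "les p q" if "V_le_star P le les p q"
    using les_if_V_le_star[OF les_refl les_trans le_les p that] .
qed

end
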